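(* If an affine bijection $\sigma:\mathcal{G}_N\to\mathcal{G}_N$ satisfies $\sigma(A_0)=A_0$ and $\sigma(A_\mu)=A_\mu$ for all $\mu=1,\ldots,N$, then $\sigma$ is the identity.
   Context: $\mathcal{G}_N$ is the set of real symmetric positive semi-definite $N\times N$ matrices with unit diagonal. $A_0$ is the all-ones $N\times N$ matrix, and for $\mu=1,\ldots,N$, $A_\mu=\mathbf{s}\mathbf{s}^\top$ where $\mathbf{s}\in\{\pm1\}^N$ has $s_\mu=-1$ and all other entries $+1$. *)

theory Defs
  imports "HOL-Analysis.Analysis"
begin

text \<open>Real N x N matrices are modelled as real^'n^'n, with N = CARD('n) and the
index set {1..N} identified with the finite type 'n.\<close>

definition psd :: "real^'n^'n \<Rightarrow> bool" where
  "psd M \<longleftrightarrow> (\<forall>x :: real^'n. 0 \<le> x \<bullet> (M *v x))"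

definition elliptope :: "(real^'n^'n) set" where
  "elliptope = {M. transpose M = M \<and> psd M \<and> (\<forall>i. M $ i $ i = 1)}"

definition A0 :: "real^'n^'n" where
  "A0 = (\<chi> i j. 1)"

definition sgnvec :: "'n \<Rightarrow> real^'n" where
  "sgnvec mu = (\<chi> k. if k = mu then -1 else 1)"

definition Amu :: "'n \<Rightarrow> real^'n^'n" where
  "Amu mu = (\<chi> i j. sgnvec mu $ i * sgnvec mu $ j)"

definition affine_on :: "('a::real_vector) set \<Rightarrow> ('a \<Rightarrow> 'b::real_vector) \<Rightarrow> bool" where
  "affine_on S f \<longleftrightarrow> (\<forall>x\<in>S. \<forall>y\<in>S. \<forall>u::real. 0 \<le> u \<and> u \<le> 1 \<longrightarrow>
      f (u *\<^sub>R x + (1 - u) *\<^sub>R y) = u *\<^sub>R f x + (1 - u) *\<^sub>R f y)"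

end

theory Submission
  imports Defs
begin

text \<open>An affine map that fixes Y and u X + (1 - u) Y with 0 < u also fixes X, so it suffices to
  find enough fixed points. For indices a \<noteq> b, the matrices agreeing with A0 outside rows and
  columns a, b form a slice of G_N that is a copy of the 3 \<times> 3 elliptope, with rank-one vertices
  A0, A_a, A_b and a fourth one V; \<sigma> fixes the triangle spanned by the first three. By injectivity
  and a face argument at the centroid of the triangle, the preimage of V lies in the slice; the
  parallelogram spanned at the centroid by the rays towards V and towards its preimage, with its
  fourth vertex in the triangle, then shows that this preimage is V itself. Averaging the four
  vertices, \<sigma> fixes every slice matrix with entry t \<in> [-1, 1] at (a, b) and zeros elsewhere in
  rows a and b. Finally, a uniform average of such matrices over all pairs (a, b) equals
  (1/M) X + (1 - 1/M) W with W fixed, for any X in G_N.\<close>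

section \<open>Entries and quadratic forms on the elliptope\<close>

lemma transpose_eq_imp_entry_sym:
  assumes "transpose M = M"
  shows "M $ i $ j = M $ j $ i"
  using assms by (metis transpose_def vec_lambda_beta)

lemma elliptope_entry_sym: "X \<in> elliptope \<Longrightarrow> X $ i $ j = X $ j $ i"
  by (simp add: elliptope_def transpose_eq_imp_entry_sym)

lemma elliptope_diag: "X \<in> elliptope \<Longrightarrow> X $ i $ i = 1"
  by (simp add: elliptope_def)

lemma elliptope_psd: "X \<in> elliptope \<Longrightarrow> 0 \<le> v \<bullet> (X *v v)"
  by (simp add: elliptope_def psd_def)

lemma inner_axis_matrix_vector_axis: "axis i (1::real) \<bullet> (M *v axis j 1) = M $ i $ j"
  by (simp add: matrix_vector_mult_basis inner_axis' column_def)

lemma quadratic_form_three_axes: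
  fixes M :: "real^'n^'n" and x1 x2 x3 :: real and i j k :: 'n
  defines "v \<equiv> x1 *\<^sub>R axis i 1 + x2 *\<^sub>R axis j 1 + x3 *\<^sub>R axis k 1"
  shows "v \<bullet> (M *v v) = x1*x1*M$i$i + x1*x2*M$i$j + x1*x3*M$i$k
     + x2*x1*M$j$i + x2*x2*M$j$j + x2*x3*M$j$k + x3*x1*M$k$i + x3*x2*M$k$j + x3*x3*M$k$k"
  unfolding v_def
  by (simp add: matrix_vector_right_distrib matrix_vector_mult_scaleR inner_add_left inner_add_right
      inner_axis_matrix_vector_axis algebra_simps)

lemma elliptope_quadratic_form_three_axes:
  assumes "X \<in> elliptope"
  shows "0 \<le> x1*x1 + x2*x2 + x3*x3 + 2*x1*x2*X$i$j + 2*x1*x3*X$i$k + 2*x2*x3*X$j$k"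
proof -
  have "0 \<le> (x1 *\<^sub>R axis i 1 + x2 *\<^sub>R axis j 1 + x3 *\<^sub>R axis k 1) \<bullet>
      (X *v (x1 *\<^sub>R axis i 1 + x2 *\<^sub>R axis j 1 + x3 *\<^sub>R axis k (1::real)))"
    using elliptope_psd[OF assms] .
  then show ?thesis
    unfolding quadratic_form_three_axes
    using elliptope_diag[OF assms] elliptope_entry_sym[OF assms] by (simp add: algebra_simps)
qed

lemma elliptope_entry_abs_le:
  assumes "X \<in> elliptope"
  shows "\<bar>X $ i $ j\<bar> \<le> 1"
  using elliptope_quadratic_form_three_axes[OF assms, of 1 1 0 i j j]
    elliptope_quadratic_form_three_axes[OF assms, of 1 "-1" 0 i j j]
  by (simp add: abs_le_iff)

definition triangle_functional :: "'n \<Rightarrow> 'n \<Rightarrow> 'n \<Rightarrow> real^'n^'n \<Rightarrow> real" where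
  "triangle_functional a b c M = M $ a $ c + M $ b $ c - M $ a $ b"

lemma triangle_functional_add_diff_scaleR [simp]:
  "triangle_functional a b c (M + N) = triangle_functional a b c M + triangle_functional a b c N"
  "triangle_functional a b c (M - N) = triangle_functional a b c M - triangle_functional a b c N"
  "triangle_functional a b c (r *\<^sub>R M) = r * triangle_functional a b c M"
  by (simp_all add: triangle_functional_def algebra_simps)

lemma elliptope_triangle_functional_bounds:
  assumes "X \<in> elliptope"
  shows "-3 \<le> triangle_functional a b c X" "triangle_functional a b c X \<le> 3/2"
proof -
  show "triangle_functional a b c X \<le> 3/2"
    using elliptope_quadratic_form_three_axes[OF assms, of 1 "-1" "-1" c a b]
      elliptope_entry_sym[OF assms, of a c] elliptope_entry_sym[OF assms, of b c]
    by (simp add: triangle_functional_def)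
  show "-3 \<le> triangle_functional a b c X"
    using elliptope_entry_abs_le[OF assms, of a c] elliptope_entry_abs_le[OF assms, of b c]
      elliptope_entry_abs_le[OF assms, of a b]
    by (simp add: triangle_functional_def abs_le_iff)
qed

lemma convex_elliptope: "convex (elliptope :: (real^'n^'n) set)"
proof (rule convexI)
  fix X Y :: "real^'n^'n" and u v :: real
  assume X: "X \<in> elliptope" and Y: "Y \<in> elliptope" and uv: "0 \<le> u" "0 \<le> v" "u + v = 1"
  have "transpose (u *\<^sub>R X + v *\<^sub>R Y) = u *\<^sub>R X + v *\<^sub>R Y"
    using elliptope_entry_sym[OF X] elliptope_entry_sym[OF Y] by (simp add: transpose_def vec_eq_iff)
  moreover have "psd (u *\<^sub>R X + v *\<^sub>R Y)"
    unfolding psd_def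
  proof
    fix w :: "real^'n"
    show "0 \<le> w \<bullet> ((u *\<^sub>R X + v *\<^sub>R Y) *v w)"
      using elliptope_psd[OF X, of w] elliptope_psd[OF Y, of w] uv
      by (simp add: matrix_vector_mult_add_rdistrib scaleR_matrix_vector_assoc[symmetric] inner_add_right)
  qed
  ultimately show "u *\<^sub>R X + v *\<^sub>R Y \<in> elliptope"
    using elliptope_diag[OF X] elliptope_diag[OF Y] uv by (simp add: elliptope_def)
qed

section \<open>Affine maps on convex sets\<close>

lemma affine_onD:
  assumes "affine_on S f" "x \<in> S" "y \<in> S" "0 \<le> u" "u \<le> 1"
  shows "f (u *\<^sub>R x + (1 - u) *\<^sub>R y) = u *\<^sub>R f x + (1 - u) *\<^sub>R f y"
  using assms unfolding affine_on_def by blast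

lemma affine_on_cancel:
  assumes "affine_on S f" "x \<in> S" "y \<in> S" "0 < u" "u \<le> 1"
    and "f (u *\<^sub>R x + (1 - u) *\<^sub>R y) = u *\<^sub>R v + (1 - u) *\<^sub>R f y"
  shows "f x = v"
proof -
  have "u *\<^sub>R f x = u *\<^sub>R v"
    using affine_onD[OF assms(1-3), of u] assms(4-6) by simp
  then show ?thesis using \<open>0 < u\<close> by simp
qed

lemma line_point_comb_start:
  fixes x y :: "'a::real_vector"
  assumes "u * (1 - t) = 1"
  shows "u *\<^sub>R (x + t *\<^sub>R (y - x)) + (1 - u) *\<^sub>R y = x"
proof -
  have "u *\<^sub>R (x + t *\<^sub>R (y - x)) + (1 - u) *\<^sub>R y = (u * (1 - t)) *\<^sub>R x + (u * t + 1 - u) *\<^sub>R y"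
    by (simp add: algebra_simps)
  also have "u * t + 1 - u = 0" using assms by (simp add: algebra_simps)
  finally show ?thesis using assms by simp
qed

lemma line_point_comb_end:
  fixes x y :: "'a::real_vector"
  assumes "u * t = 1"
  shows "u *\<^sub>R (x + t *\<^sub>R (y - x)) + (1 - u) *\<^sub>R x = y"
proof -
  have "u *\<^sub>R (x + t *\<^sub>R (y - x)) + (1 - u) *\<^sub>R x = (u * t) *\<^sub>R y + (1 - u * t) *\<^sub>R x"
    by (simp add: algebra_simps)
  then show ?thesis using assms by simp
qed

lemma affine_on_line:
  assumes f: "affine_on S f" and S: "x \<in> S" "y \<in> S" "x + t *\<^sub>R (y - x) \<in> S"
  shows "f (x + t *\<^sub>R (y - x)) = f x + t *\<^sub>R (f y - f x)"
proof -
  consider "t < 0" | "0 \<le> t" "t \<le> 1" | "1 < t" by linarith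
  then show ?thesis
  proof cases
    case 1
    have u: "1/(1-t) * (1 - t) = 1" "0 < 1/(1-t)" "1/(1-t) \<le> 1" using 1 by auto
    show ?thesis
      by (rule affine_on_cancel[OF f S(3,2) u(2,3)])
        (simp add: line_point_comb_start[OF u(1)])
  next
    case 2
    have "x + t *\<^sub>R (y - x) = t *\<^sub>R y + (1 - t) *\<^sub>R x" by (simp add: algebra_simps)
    then show ?thesis using affine_onD[OF f S(2,1) 2] by (simp add: algebra_simps)
  next
    case 3
    have u: "1/t * t = 1" "0 < 1/t" "1/t \<le> 1" using 3 by auto
    show ?thesis
      by (rule affine_on_cancel[OF f S(3,1) u(2,3)])
        (simp add: line_point_comb_end[OF u(1)])
  qed
qed

lemma affine_on_parallelogram:
  assumes f: "affine_on S f" and S: "x \<in> S" "y \<in> S" "z \<in> S" "w \<in> S" and "x + y = z + w"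
  shows "f x + f y = f z + f w"
proof -
  have "(1/2::real) *\<^sub>R x + (1 - 1/2) *\<^sub>R y = (1/2::real) *\<^sub>R z + (1 - 1/2) *\<^sub>R w"
    using \<open>x + y = z + w\<close> by (simp add: scaleR_add_right[symmetric])
  then have "(1/2::real) *\<^sub>R f x + (1 - 1/2) *\<^sub>R f y = (1/2::real) *\<^sub>R f z + (1 - 1/2) *\<^sub>R f w"
    using affine_onD[OF f S(1,2), of "1/2"] affine_onD[OF f S(3,4), of "1/2"] by simp
  then show ?thesis by (simp add: scaleR_add_right[symmetric])
qed

text \<open>Affinity along the rays from the fixed point p towards v and towards a preimage x of v,
  and across the parallelogram they span, whose fourth vertex is fixed.\<close>
lemma affine_on_two_rays:
  assumes f: "affine_on S f" and S: "p \<in> S" "v \<in> S" "x \<in> S" and fixed: "f p = p" "f x = v"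
    and z: "p + \<alpha> *\<^sub>R (v - p) \<in> S" "p + \<beta> *\<^sub>R (x - p) \<in> S"
    and w: "p + \<beta> *\<^sub>R (x - p) - \<alpha> *\<^sub>R (v - p) \<in> S"
      "f (p + \<beta> *\<^sub>R (x - p) - \<alpha> *\<^sub>R (v - p)) = p + \<beta> *\<^sub>R (x - p) - \<alpha> *\<^sub>R (v - p)"
  shows "\<alpha> *\<^sub>R (f v - v) = \<beta> *\<^sub>R (v - x)"
proof -
  define z where "z = p + \<alpha> *\<^sub>R (v - p)"
  define z' where "z' = p + \<beta> *\<^sub>R (x - p)"
  define w where "w = p + \<beta> *\<^sub>R (x - p) - \<alpha> *\<^sub>R (v - p)"
  have "f z' + f p = f z + f w"
    using z w(1) unfolding z_def z'_def w_def
    by (intro affine_on_parallelogram[OF f _ S(1)]) (simp_all add: algebra_simps)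
  moreover have "f z = p + \<alpha> *\<^sub>R (f v - p)"
    using affine_on_line[OF f S(1,2) z(1)] fixed unfolding z_def by simp
  moreover have "f z' = p + \<beta> *\<^sub>R (v - p)"
    using affine_on_line[OF f S(1,3) z(2)] fixed unfolding z'_def by simp
  ultimately have parallelogram: "p + \<beta> *\<^sub>R (v - p) + p = p + \<alpha> *\<^sub>R (f v - p) + w"
    using fixed(1) w(2)[folded w_def] by simp
  have "\<alpha> *\<^sub>R (f v - v) - \<beta> *\<^sub>R (v - x) = (p + \<alpha> *\<^sub>R (f v - p) + w) - (p + \<beta> *\<^sub>R (v - p) + p)"
    unfolding w_def by (simp add: algebra_simps)
  also have "\<dots> = 0" using parallelogram by simp
  finally show ?thesis by simp
qed

lemma convex_fixed_points:
  assumes "convex S" "affine_on S f"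
  shows "convex {x \<in> S. f x = x}"
proof (rule convexI)
  fix x y and u v :: real
  assume x: "x \<in> {x \<in> S. f x = x}" and y: "y \<in> {x \<in> S. f x = x}" and uv: "0 \<le> u" "0 \<le> v" "u + v = 1"
  have v: "v = 1 - u" using uv by simp
  have "f (u *\<^sub>R x + (1 - u) *\<^sub>R y) = u *\<^sub>R x + (1 - u) *\<^sub>R y"
    using affine_onD[OF assms(2), of x y u] x y uv by simp
  then show "u *\<^sub>R x + v *\<^sub>R y \<in> {x \<in> S. f x = x}"
    using convexD[OF assms(1), of x y u v] x y uv by (simp add: v)
qed

section \<open>A three-dimensional slice of the elliptope\<close>

definition outer_prod :: "real^'n \<Rightarrow> real^'n \<Rightarrow> real^'n^'n" where
  "outer_prod u w = (\<chi> i j. u $ i * w $ j)"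

lemma quadratic_form_outer_prod: "v \<bullet> (outer_prod u w *v v) = (u \<bullet> v) * (w \<bullet> v)"
proof -
  have "outer_prod u w *v v = (w \<bullet> v) *\<^sub>R u"
    by (simp add: vec_eq_iff outer_prod_def matrix_vector_mult_def inner_vec_def sum_distrib_left
        mult.commute mult.left_commute)
  then show ?thesis by (simp add: inner_commute)
qed

lemma outer_prod_self_in_elliptope:
  assumes "\<And>i. (u $ i)^2 = 1"
  shows "outer_prod u u \<in> elliptope"
  unfolding elliptope_def psd_def
proof (intro CollectI conjI allI)
  show "transpose (outer_prod u u) = outer_prod u u"
    by (simp add: transpose_def outer_prod_def vec_eq_iff mult.commute)
  show "0 \<le> v \<bullet> (outer_prod u u *v v)" for v
    by (simp add: quadratic_form_outer_prod)
  show "outer_prod u u $ i $ i = 1" for i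
    using assms[of i] by (simp add: outer_prod_def power2_eq_square)
qed

lemma A0_in_elliptope: "(A0 :: real^'n^'n) \<in> elliptope"
proof -
  have "(A0 :: real^'n^'n) = outer_prod (\<chi> i. 1) (\<chi> i. 1)" by (simp add: A0_def outer_prod_def)
  then show ?thesis by (metis outer_prod_self_in_elliptope power_one vec_lambda_beta)
qed

lemma Amu_in_elliptope: "Amu mu \<in> elliptope"
proof -
  have "Amu mu = outer_prod (sgnvec mu) (sgnvec mu)" by (simp add: Amu_def outer_prod_def)
  moreover have "(sgnvec mu $ i)^2 = 1" for i by (simp add: sgnvec_def)
  ultimately show ?thesis by (simp add: outer_prod_self_in_elliptope)
qed

definition compl_indicator :: "'n \<Rightarrow> 'n \<Rightarrow> real^'n" where
  "compl_indicator a b = (\<chi> k. if k = a \<or> k = b then 0 else 1)"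

text \<open>For a \<noteq> b, the quadratic form of this matrix at v is that of the 3 \<times> 3 correlation
  matrix [[1, z, x], [z, 1, y], [x, y, 1]] at (v$a, v$b, compl_indicator a b \<bullet> v).\<close>
definition pair_matrix :: "'n \<Rightarrow> 'n \<Rightarrow> real \<Rightarrow> real \<Rightarrow> real \<Rightarrow> real^'n^'n" where
  "pair_matrix a b x y z = (\<chi> i j.
     if i = a then (if j = a then 1 else if j = b then z else x)
     else if i = b then (if j = a then z else if j = b then 1 else y)
     else (if j = a then x else if j = b then y else 1))"

lemma pair_matrix_eq_outer_prods:
  assumes "a \<noteq> b"
  defines "g \<equiv> compl_indicator a b"
  shows "pair_matrix a b x y z = outer_prod g g + outer_prod (axis a 1) (axis a 1)
      + outer_prod (axis b 1) (axis b 1)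
    + x *\<^sub>R (outer_prod (axis a 1) g + outer_prod g (axis a 1))
    + y *\<^sub>R (outer_prod (axis b 1) g + outer_prod g (axis b 1))
    + z *\<^sub>R (outer_prod (axis a 1) (axis b 1) + outer_prod (axis b 1) (axis a 1))"
  using assms by (simp add: vec_eq_iff pair_matrix_def outer_prod_def compl_indicator_def axis_def)

lemma quadratic_form_pair_matrix:
  fixes v :: "real^'n"
  assumes "a \<noteq> b"
  defines "g \<equiv> compl_indicator a b \<bullet> v"
  shows "v \<bullet> (pair_matrix a b x y z *v v) = g^2 + (v$a)^2 + (v$b)^2
     + 2*x*(v$a)*g + 2*y*(v$b)*g + 2*z*(v$a)*(v$b)"
  unfolding pair_matrix_eq_outer_prods[OF assms(1)] g_def
  by (simp add: matrix_vector_mult_add_rdistrib scaleR_matrix_vector_assoc[symmetric] inner_add_right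
      quadratic_form_outer_prod inner_axis' power2_eq_square algebra_simps)

lemma pair_matrix_diag: "pair_matrix a b x y z $ i $ i = 1"
  by (simp add: pair_matrix_def)

lemma pair_matrix_entries:
  assumes "a \<noteq> b" "c \<noteq> a" "c \<noteq> b"
  shows "pair_matrix a b x y z $ a $ c = x" "pair_matrix a b x y z $ b $ c = y"
    "pair_matrix a b x y z $ a $ b = z"
  using assms by (auto simp: pair_matrix_def)

lemma triangle_functional_pair_matrix:
  assumes "a \<noteq> b" "c \<noteq> a" "c \<noteq> b"
  shows "triangle_functional a b c (pair_matrix a b x y z) = x + y - z"
  using pair_matrix_entries[OF assms] by (simp add: triangle_functional_def)

lemma pair_matrix_in_elliptope:
  assumes "a \<noteq> b"
    and "\<And>g p r. 0 \<le> g^2 + p^2 + r^2 + 2*x*p*g + 2*y*r*g + 2*z*p*r"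
  shows "pair_matrix a b x y z \<in> elliptope"
  unfolding elliptope_def psd_def
proof (intro CollectI conjI allI)
  show "transpose (pair_matrix a b x y z) = pair_matrix a b x y z"
    using assms(1) by (auto simp: transpose_def vec_eq_iff pair_matrix_def)
  show "0 \<le> v \<bullet> (pair_matrix a b x y z *v v)" for v
    unfolding quadratic_form_pair_matrix[OF assms(1)] by (rule assms(2))
  show "pair_matrix a b x y z $ i $ i = 1" for i
    by (rule pair_matrix_diag)
qed

lemma pair_matrix_rank_one_in_elliptope:
  assumes "a \<noteq> b" "x^2 = 1" "y^2 = 1"
  shows "pair_matrix a b x y (x*y) \<in> elliptope"
proof (rule pair_matrix_in_elliptope[OF assms(1)])
  fix g p r :: real
  have "g^2 + p^2 + r^2 + 2*x*p*g + 2*y*r*g + 2*(x*y)*p*r = (g + x*p + y*r)^2"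
    using assms by (simp add: power2_eq_square algebra_simps)
  then show "0 \<le> g^2 + p^2 + r^2 + 2*x*p*g + 2*y*r*g + 2*(x*y)*p*r" by simp
qed

text \<open>Within 1/6 of the centroid (1/3, 1/3, -1/3) of the rank-one vertices (1, 1, 1),
  (-1, 1, -1), (1, -1, -1) the quadratic form is a nonnegative combination of squares.\<close>
lemma pair_matrix_near_centroid_in_elliptope:
  assumes "a \<noteq> b" "\<bar>x - 1/3\<bar> \<le> 1/6" "\<bar>y - 1/3\<bar> \<le> 1/6" "\<bar>z + 1/3\<bar> \<le> 1/6"
  shows "pair_matrix a b x y z \<in> elliptope"
proof (rule pair_matrix_in_elliptope[OF assms(1)])
  fix g p r :: real
  have x: "0 \<le> 1/6 + (x - 1/3)" "0 \<le> 1/6 - (x - 1/3)"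
    and y: "0 \<le> 1/6 + (y - 1/3)" "0 \<le> 1/6 - (y - 1/3)"
    and z: "0 \<le> 1/6 + (z + 1/3)" "0 \<le> 1/6 - (z + 1/3)"
    using assms(2-4) unfolding abs_le_iff by linarith+
  have "g^2 + p^2 + r^2 + 2*x*p*g + 2*y*r*g + 2*z*p*r =
     ((g+p)^2 + (g+r)^2 + (p-r)^2)/3 +
     ((1/6 + (x - 1/3))*(p+g)^2 + (1/6 - (x - 1/3))*(p-g)^2
     + (1/6 + (y - 1/3))*(r+g)^2 + (1/6 - (y - 1/3))*(r-g)^2
     + (1/6 + (z + 1/3))*(p+r)^2 + (1/6 - (z + 1/3))*(p-r)^2)/2"
    by (simp add: power2_eq_square field_simps)
  also have "0 \<le> \<dots>"
    by (intro add_nonneg_nonneg divide_nonneg_nonneg zero_le_power2 mult_nonneg_nonneg[OF x(1)]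
        mult_nonneg_nonneg[OF x(2)] mult_nonneg_nonneg[OF y(1)] mult_nonneg_nonneg[OF y(2)]
        mult_nonneg_nonneg[OF z(1)] mult_nonneg_nonneg[OF z(2)]) simp_all
  finally show "0 \<le> g^2 + p^2 + r^2 + 2*x*p*g + 2*y*r*g + 2*z*p*r" .
qed

lemma A0_eq_pair_matrix: "a \<noteq> b \<Longrightarrow> A0 = pair_matrix a b 1 1 1"
  by (simp add: A0_def pair_matrix_def vec_eq_iff)

lemma Amu_eq_pair_matrix_fst: "a \<noteq> b \<Longrightarrow> Amu a = pair_matrix a b (-1) 1 (-1)"
  by (simp add: Amu_def sgnvec_def pair_matrix_def vec_eq_iff)

lemma Amu_eq_pair_matrix_snd: "a \<noteq> b \<Longrightarrow> Amu b = pair_matrix a b 1 (-1) (-1)"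
  by (auto simp add: Amu_def sgnvec_def pair_matrix_def vec_eq_iff)

lemma pair_matrix_affine_comb2:
  assumes "u + v = 1"
  shows "u *\<^sub>R pair_matrix a b x y z + v *\<^sub>R pair_matrix a b x' y' z'
    = pair_matrix a b (u*x + v * x') (u*y + v * y') (u*z + v * z')"
  using assms by (simp add: pair_matrix_def vec_eq_iff)

lemma pair_matrix_affine_comb3:
  assumes "u + v + w = 1"
  shows "u *\<^sub>R pair_matrix a b x y z + v *\<^sub>R pair_matrix a b x' y' z'
      + w *\<^sub>R pair_matrix a b x'' y'' z''
    = pair_matrix a b (u*x + v * x' + w * x'') (u*y + v * y' + w * y'') (u*z + v * z' + w * z'')"
  using assms by (simp add: pair_matrix_def vec_eq_iff)

lemma pair_matrix_cong:
  "x = x' \<Longrightarrow> y = y' \<Longrightarrow> z = z' \<Longrightarrow> pair_matrix a b x y z = pair_matrix a b x' y' z'"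
  by simp

lemma pair_matrix_line:
  "pair_matrix a b x y z + t *\<^sub>R (pair_matrix a b x' y' z' - pair_matrix a b x y z)
    = pair_matrix a b (x + t * (x' - x)) (y + t * (y' - y)) (z + t * (z' - z))"
  by (simp add: pair_matrix_def vec_eq_iff algebra_simps)

lemma pair_matrix_add_diff:
  "pair_matrix a b x y z + (pair_matrix a b x' y' z' - pair_matrix a b x'' y'' z'')
    = pair_matrix a b (x + x' - x'') (y + y' - y'') (z + z' - z'')"
  by (simp add: pair_matrix_def vec_eq_iff algebra_simps)

text \<open>Entries of G_N are at most 1, so X inherits the entries 1 of the centroid outside rows
  and columns a, b; and a unit entry X$i$c forces rows i and c of X to coincide.\<close>
lemma pair_matrix_of_segment_through_centroid:
  assumes X: "X \<in> elliptope" and Y: "Y \<in> elliptope" and u: "0 < u" "u < 1"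
    and eq: "u *\<^sub>R Y + (1 - u) *\<^sub>R X = pair_matrix a b (1/3) (1/3) (-1/3)"
    and abc: "a \<noteq> b" "c \<noteq> a" "c \<noteq> b"
  shows "X = pair_matrix a b (X$a$c) (X$b$c) (X$a$b)"
proof -
  have outside: "X$i$j = 1" if "i \<noteq> a" "i \<noteq> b" "j \<noteq> a" "j \<noteq> b" for i j
  proof -
    have comb: "u * Y$i$j + (1 - u) * X$i$j = 1"
      using arg_cong[OF eq, of "\<lambda>M. M$i$j"] that by (simp add: pair_matrix_def)
    have "Y$i$j \<le> 1" "X$i$j \<le> 1"
      using elliptope_entry_abs_le[OF Y] elliptope_entry_abs_le[OF X] abs_le_iff by blast+
    have "u * Y$i$j \<le> u" using mult_left_mono[OF \<open>Y$i$j \<le> 1\<close>, of u] u by simp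
    then have "1 - u \<le> (1 - u) * X$i$j" using comb by linarith
    then show ?thesis using u \<open>X$i$j \<le> 1\<close> by simp
  qed
  have row: "X$k$i = X$k$c" if "i \<noteq> a" "i \<noteq> b" for i k
  proof -
    define t where "t = X$k$c - X$k$i"
    have "0 \<le> 2 - 2 * X$i$c - t^2"
      using elliptope_quadratic_form_three_axes[OF X, of 1 "-1" t i c k]
        elliptope_entry_sym[OF X, of i k] elliptope_entry_sym[OF X, of c k]
      unfolding t_def by (simp add: algebra_simps power2_eq_square)
    then have "t^2 \<le> 0" using outside[of i c] that abc by simp
    then have "t = 0" by simp
    then show ?thesis unfolding t_def by simp
  qed
  have "X$i$j = pair_matrix a b (X$a$c) (X$b$c) (X$a$b) $ i $ j" for i j
    using outside[of i j] row[of j a] row[of j b] row[of i a] row[of i b] elliptope_diag[OF X]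
      elliptope_entry_sym[OF X, of a b] elliptope_entry_sym[OF X, of i a] elliptope_entry_sym[OF X, of i b]
    by (auto simp: pair_matrix_def)
  then show ?thesis unfolding vec_eq_iff by blast
qed

section \<open>Fixed points in the slice\<close>

lemma fixed_triangle:
  fixes \<sigma> :: "real^'n^'n \<Rightarrow> real^'n^'n"
  assumes aff: "affine_on elliptope \<sigma>"
    and fixed: "\<sigma> A0 = A0" "\<sigma> (Amu a) = Amu a" "\<sigma> (Amu b) = Amu b"
    and ab: "a \<noteq> b" and xy: "0 \<le> x + y" "x \<le> 1" "y \<le> 1"
  shows "pair_matrix a b x y (x + y - 1) \<in> {X \<in> elliptope. \<sigma> X = X}"
proof -
  let ?F = "{X \<in> elliptope. \<sigma> X = X}"
  have "{A0, Amu a, Amu b} \<subseteq> ?F"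
    using fixed A0_in_elliptope Amu_in_elliptope by auto
  then have hull: "convex hull {A0, Amu a, Amu b} \<subseteq> ?F"
    using convex_fixed_points[OF convex_elliptope aff] by (simp add: hull_minimal)
  have weights: "(x + y)/2 + (1 - x)/2 + (1 - y)/2 = 1" by (simp add: field_simps)
  have "pair_matrix a b x y (x + y - 1)
      = ((x + y)/2) *\<^sub>R A0 + ((1 - x)/2) *\<^sub>R Amu a + ((1 - y)/2) *\<^sub>R Amu b"
    unfolding A0_eq_pair_matrix[OF ab] Amu_eq_pair_matrix_fst[OF ab] Amu_eq_pair_matrix_snd[OF ab]
      pair_matrix_affine_comb3[OF weights]
    by (rule pair_matrix_cong) (simp_all add: field_simps)
  also have "\<dots> \<in> convex hull {A0, Amu a, Amu b}"
    unfolding convex_hull_3 using xy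
    by (intro CollectI exI[of _ "(x + y)/2"] exI[of _ "(1 - x)/2"] exI[of _ "(1 - y)/2"])
      (auto simp: field_simps)
  finally show ?thesis using hull by blast
qed

text \<open>The centroid P of the fixed triangle is (8/9) Y + (1/9) V for the fourth vertex V and a
  point Y of G_N, so by injectivity P is also the same combination of the preimages of Y and V.\<close>
lemma preimage_fourth_vertex_in_slice:
  fixes \<sigma> :: "real^'n^'n \<Rightarrow> real^'n^'n"
  assumes bij: "bij_betw \<sigma> elliptope elliptope" and aff: "affine_on elliptope \<sigma>"
    and fixed: "\<sigma> A0 = A0" "\<sigma> (Amu a) = Amu a" "\<sigma> (Amu b) = Amu b"
    and abc: "a \<noteq> b" "c \<noteq> a" "c \<noteq> b"
    and X0: "X0 \<in> elliptope" "\<sigma> X0 = pair_matrix a b (-1) (-1) 1"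
  shows "X0 = pair_matrix a b (X0$a$c) (X0$b$c) (X0$a$b)"
proof -
  define P where "P = pair_matrix a b (1/3) (1/3) (-1/3)"
  define Y where "Y = pair_matrix a b (1/2) (1/2) (-1/2)"
  have P: "P \<in> elliptope" "\<sigma> P = P"
    using fixed_triangle[OF aff fixed abc(1), of "1/3" "1/3"] unfolding P_def by simp_all
  have "Y \<in> elliptope"
    unfolding Y_def by (rule pair_matrix_near_centroid_in_elliptope[OF abc(1)]) simp_all
  then obtain Y0 where Y0: "Y0 \<in> elliptope" "\<sigma> Y0 = Y"
    using bij by (metis bij_betw_def imageE)
  have comb: "(8/9) *\<^sub>R Y0 + (1 - 8/9) *\<^sub>R X0 \<in> elliptope"
    using convexD[OF convex_elliptope Y0(1) X0(1)] by simp
  have "\<sigma> ((8/9) *\<^sub>R Y0 + (1 - 8/9) *\<^sub>R X0) = (8/9) *\<^sub>R Y + (1 - 8/9) *\<^sub>R pair_matrix a b (-1) (-1) 1"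
    using affine_onD[OF aff Y0(1) X0(1), of "8/9"] Y0(2) X0(2) by simp
  also have "\<dots> = \<sigma> P"
    unfolding P(2) unfolding Y_def P_def by (subst pair_matrix_affine_comb2) simp_all
  finally have "(8/9) *\<^sub>R Y0 + (1 - 8/9) *\<^sub>R X0 = P"
    using bij comb P(1) by (meson bij_betw_def inj_onD)
  then show ?thesis
    using pair_matrix_of_segment_through_centroid[OF X0(1) Y0(1), of "8/9" a b c] abc
    unfolding P_def by simp
qed

text \<open>The step lengths are chosen so that the fourth vertex of the parallelogram spanned at the
  centroid lies in the triangle, the level set 1 of the triangle functional within the slice.\<close>
lemma centroid_parallelogram_in_elliptope:
  assumes abc: "a \<noteq> b" "c \<noteq> a" "c \<noteq> b"
    and X0: "X0 \<in> elliptope" "X0 = pair_matrix a b x0 y0 z0"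
  defines "P \<equiv> pair_matrix a b (1/3) (1/3) (-1/3)" and "V \<equiv> pair_matrix a b (-1) (-1) 1"
    and "\<alpha> \<equiv> (1 - (x0 + y0 - z0)) / 32" and "\<beta> \<equiv> 1/8"
  shows "P + \<alpha> *\<^sub>R (V - P) \<in> elliptope" "P + \<beta> *\<^sub>R (X0 - P) \<in> elliptope"
    and "\<exists>x y. 0 \<le> x + y \<and> x \<le> 1 \<and> y \<le> 1
      \<and> P + \<beta> *\<^sub>R (X0 - P) - \<alpha> *\<^sub>R (V - P) = pair_matrix a b x y (x + y - 1)"
proof -
  have "\<bar>x0\<bar> \<le> 1" "\<bar>y0\<bar> \<le> 1" "\<bar>z0\<bar> \<le> 1"
    using elliptope_entry_abs_le[OF X0(1), of a c] elliptope_entry_abs_le[OF X0(1), of b c]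
      elliptope_entry_abs_le[OF X0(1), of a b] pair_matrix_entries[OF abc]
    unfolding X0(2) by simp_all
  then have x0: "\<bar>\<beta> * (x0 - 1/3)\<bar> \<le> 1/6" "\<bar>\<beta> * (y0 - 1/3)\<bar> \<le> 1/6" "\<bar>\<beta> * (z0 + 1/3)\<bar> \<le> 1/6"
    unfolding \<beta>_def abs_le_iff by auto
  have \<alpha>: "\<bar>4 * \<alpha> / 3\<bar> \<le> 1/6"
    using elliptope_triangle_functional_bounds[OF X0(1), of a b c]
    unfolding X0(2) triangle_functional_pair_matrix[OF abc] \<alpha>_def by (simp add: abs_le_iff)
  have Z: "P + \<alpha> *\<^sub>R (V - P) = pair_matrix a b (1/3 - 4*\<alpha>/3) (1/3 - 4*\<alpha>/3) (-1/3 + 4*\<alpha>/3)"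
    unfolding P_def V_def pair_matrix_line by (simp add: algebra_simps)
  then show "P + \<alpha> *\<^sub>R (V - P) \<in> elliptope"
    using \<alpha> by (simp add: pair_matrix_near_centroid_in_elliptope[OF abc(1)] abs_le_iff)
  have Z': "P + \<beta> *\<^sub>R (X0 - P)
      = pair_matrix a b (1/3 + \<beta>*(x0 - 1/3)) (1/3 + \<beta>*(y0 - 1/3)) (-1/3 + \<beta>*(z0 + 1/3))"
    unfolding P_def X0(2) pair_matrix_line by (simp add: algebra_simps)
  then show "P + \<beta> *\<^sub>R (X0 - P) \<in> elliptope"
    using x0 by (simp add: pair_matrix_near_centroid_in_elliptope[OF abc(1)])
  define d1 where "d1 = \<beta>*(x0 - 1/3) + 4*\<alpha>/3"
  define d2 where "d2 = \<beta>*(y0 - 1/3) + 4*\<alpha>/3"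
  have "P + \<beta> *\<^sub>R (X0 - P) - \<alpha> *\<^sub>R (V - P) = P + ((P + \<beta> *\<^sub>R (X0 - P)) - (P + \<alpha> *\<^sub>R (V - P)))"
    by (simp add: algebra_simps)
  also have "\<dots> = pair_matrix a b (1/3 + d1) (1/3 + d2) ((1/3 + d1) + (1/3 + d2) - 1)"
    unfolding Z Z' unfolding P_def pair_matrix_add_diff
    by (rule pair_matrix_cong) (simp_all add: d1_def d2_def \<alpha>_def \<beta>_def field_simps)
  finally have W: "P + \<beta> *\<^sub>R (X0 - P) - \<alpha> *\<^sub>R (V - P)
    = pair_matrix a b (1/3 + d1) (1/3 + d2) ((1/3 + d1) + (1/3 + d2) - 1)" .
  have "\<bar>d1\<bar> \<le> 1/3"
    using x0(1) \<alpha> abs_triangle_ineq[of "\<beta>*(x0 - 1/3)" "4*\<alpha>/3"] unfolding d1_def by linarith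
  moreover have "\<bar>d2\<bar> \<le> 1/3"
    using x0(2) \<alpha> abs_triangle_ineq[of "\<beta>*(y0 - 1/3)" "4*\<alpha>/3"] unfolding d2_def by linarith
  ultimately have "0 \<le> (1/3 + d1) + (1/3 + d2)" "1/3 + d1 \<le> 1" "1/3 + d2 \<le> 1"
    by (simp_all add: abs_le_iff)
  with W show "\<exists>x y. 0 \<le> x + y \<and> x \<le> 1 \<and> y \<le> 1
      \<and> P + \<beta> *\<^sub>R (X0 - P) - \<alpha> *\<^sub>R (V - P) = pair_matrix a b x y (x + y - 1)"
    by blast
qed

lemma fourth_vertex_preimage_relation:
  fixes \<sigma> :: "real^'n^'n \<Rightarrow> real^'n^'n"
  assumes aff: "affine_on elliptope \<sigma>"
    and fixed: "\<sigma> A0 = A0" "\<sigma> (Amu a) = Amu a" "\<sigma> (Amu b) = Amu b"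
    and abc: "a \<noteq> b" "c \<noteq> a" "c \<noteq> b"
    and X0: "X0 \<in> elliptope" "\<sigma> X0 = pair_matrix a b (-1) (-1) 1"
    and slice: "X0 = pair_matrix a b x0 y0 z0"
  shows "(1 - (x0 + y0 - z0)) * (triangle_functional a b c (\<sigma> (pair_matrix a b (-1) (-1) 1)) + 3)
    = -4 * (3 + (x0 + y0 - z0))"
proof -
  define V where "V = pair_matrix a b (-1) (-1) 1"
  define P where "P = pair_matrix a b (1/3) (1/3) (-1/3)"
  define \<alpha> where "\<alpha> = (1 - (x0 + y0 - z0)) / 32"
  define \<beta> :: real where "\<beta> = 1/8"
  note points = centroid_parallelogram_in_elliptope[OF abc X0(1) slice, folded P_def V_def \<alpha>_def \<beta>_def]
  have V: "V \<in> elliptope"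
    unfolding V_def using pair_matrix_rank_one_in_elliptope[OF abc(1), of "-1" "-1"] by simp
  have P: "P \<in> elliptope" "\<sigma> P = P"
    using fixed_triangle[OF aff fixed abc(1), of "1/3" "1/3"] unfolding P_def by simp_all
  obtain x y where xy: "0 \<le> x + y" "x \<le> 1" "y \<le> 1"
    and W_eq: "P + \<beta> *\<^sub>R (X0 - P) - \<alpha> *\<^sub>R (V - P) = pair_matrix a b x y (x + y - 1)"
    using points(3) by blast
  have W: "P + \<beta> *\<^sub>R (X0 - P) - \<alpha> *\<^sub>R (V - P) \<in> {X \<in> elliptope. \<sigma> X = X}"
    unfolding W_eq by (rule fixed_triangle[OF aff fixed abc(1) xy])
  have "\<alpha> *\<^sub>R (\<sigma> V - V) = \<beta> *\<^sub>R (V - X0)"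
    using affine_on_two_rays[OF aff P(1) V X0(1) P(2) X0(2)[folded V_def] points(1,2)] W by simp
  then have "triangle_functional a b c (\<alpha> *\<^sub>R (\<sigma> V - V)) = triangle_functional a b c (\<beta> *\<^sub>R (V - X0))"
    by (rule arg_cong)
  then have "\<alpha> * (triangle_functional a b c (\<sigma> V) + 3) = \<beta> * (-3 - (x0 + y0 - z0))"
    unfolding triangle_functional_add_diff_scaleR
    by (simp add: V_def slice triangle_functional_pair_matrix[OF abc])
  then show ?thesis
    unfolding V_def \<alpha>_def \<beta>_def by (simp add: field_simps)
qed

lemma triangle_relation_forces_vertex:
  fixes l m :: real
  assumes "-3 \<le> l" "l \<le> 3/2" "-3 \<le> m" "m \<le> 3/2" "(1 - l) * (m + 3) = -4 * (3 + l)"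
  shows "l = -3"
proof (cases "l \<le> 1")
  case True
  then have "0 \<le> (1 - l) * (m + 3)" using assms(3) by simp
  then show ?thesis using assms(1,5) by simp
next
  case False
  have "(1 - l) * (9/2) \<le> (1 - l) * (m + 3)" using False assms(4) by (intro mult_left_mono_neg) auto
  then show ?thesis using assms(2,5) by simp
qed

lemma fixes_fourth_vertex:
  fixes \<sigma> :: "real^'n^'n \<Rightarrow> real^'n^'n"
  assumes bij: "bij_betw \<sigma> elliptope elliptope" and aff: "affine_on elliptope \<sigma>"
    and fixed: "\<sigma> A0 = A0" "\<sigma> (Amu a) = Amu a" "\<sigma> (Amu b) = Amu b" and ab: "a \<noteq> b"
  shows "\<sigma> (pair_matrix a b (-1) (-1) 1) = pair_matrix a b (-1) (-1) 1"
proof (cases "\<exists>c. c \<noteq> a \<and> c \<noteq> b")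
  case False
  then have "pair_matrix a b (-1) (-1) 1 = A0" by (auto simp: pair_matrix_def A0_def vec_eq_iff)
  then show ?thesis using fixed(1) by simp
next
  case True
  then obtain c where abc: "a \<noteq> b" "c \<noteq> a" "c \<noteq> b" using ab by blast
  let ?V = "pair_matrix a b (-1) (-1) 1"
  have V: "?V \<in> elliptope"
    using pair_matrix_rank_one_in_elliptope[OF ab, of "-1" "-1"] by simp
  obtain X0 where X0: "X0 \<in> elliptope" "\<sigma> X0 = ?V"
    using bij V by (metis bij_betw_def imageE)
  have slice: "X0 = pair_matrix a b (X0$a$c) (X0$b$c) (X0$a$b)"
    by (rule preimage_fourth_vertex_in_slice[OF bij aff fixed abc X0])
  have "\<sigma> ?V \<in> elliptope" using bij V by (metis bij_betw_def imageI)
  then have "X0$a$c + X0$b$c - X0$a$b = -3"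
    using triangle_relation_forces_vertex elliptope_triangle_functional_bounds[OF X0(1), of a b c]
      elliptope_triangle_functional_bounds[of "\<sigma> ?V" a b c]
      fourth_vertex_preimage_relation[OF aff fixed abc X0 slice]
    unfolding triangle_functional_def by blast
  then have "X0$a$c = -1" "X0$b$c = -1" "X0$a$b = 1"
    using elliptope_entry_abs_le[OF X0(1), of a c] elliptope_entry_abs_le[OF X0(1), of b c]
      elliptope_entry_abs_le[OF X0(1), of a b]
    by (auto simp: abs_le_iff)
  then have "X0 = ?V" using slice by simp
  then show ?thesis using X0(2) by simp
qed

text \<open>In slice coordinates, (0, 0, t) is the midpoint of (t, 1, t) on the segment from A0 to A_a
  and of (-t, -1, t) on the segment from the fourth vertex to A_b.\<close>
lemma fixes_pair_matrix_offdiag: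
  fixes \<sigma> :: "real^'n^'n \<Rightarrow> real^'n^'n"
  assumes bij: "bij_betw \<sigma> elliptope elliptope" and aff: "affine_on elliptope \<sigma>"
    and fixed: "\<sigma> A0 = A0" "\<sigma> (Amu a) = Amu a" "\<sigma> (Amu b) = Amu b"
    and ab: "a \<noteq> b" and t: "\<bar>t\<bar> \<le> 1"
  shows "pair_matrix a b 0 0 t \<in> {X \<in> elliptope. \<sigma> X = X}"
proof -
  let ?F = "{X \<in> elliptope. \<sigma> X = X}"
  let ?V = "pair_matrix a b (-1) (-1) 1"
  have F: "convex ?F" by (rule convex_fixed_points[OF convex_elliptope aff])
  have "?V \<in> elliptope"
    using pair_matrix_rank_one_in_elliptope[OF ab, of "-1" "-1"] by simp
  then have vertices: "A0 \<in> ?F" "Amu a \<in> ?F" "Amu b \<in> ?F" "?V \<in> ?F"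
    using fixed A0_in_elliptope Amu_in_elliptope fixes_fourth_vertex[OF bij aff fixed ab] by auto
  have u: "0 \<le> (1+t)/2" "0 \<le> (1-t)/2" "(1+t)/2 + (1-t)/2 = 1"
    using t by (auto simp: abs_le_iff field_simps)
  have "((1+t)/2) *\<^sub>R A0 + ((1-t)/2) *\<^sub>R Amu a \<in> ?F"
    by (rule convexD[OF F vertices(1,2) u])
  moreover have "((1+t)/2) *\<^sub>R ?V + ((1-t)/2) *\<^sub>R Amu b \<in> ?F"
    by (rule convexD[OF F vertices(4,3) u])
  ultimately have "(1/2) *\<^sub>R (((1+t)/2) *\<^sub>R A0 + ((1-t)/2) *\<^sub>R Amu a)
      + (1/2) *\<^sub>R (((1+t)/2) *\<^sub>R ?V + ((1-t)/2) *\<^sub>R Amu b) \<in> ?F"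
    by (rule convexD[OF F]) auto
  also have "(1/2) *\<^sub>R (((1+t)/2) *\<^sub>R A0 + ((1-t)/2) *\<^sub>R Amu a)
      + (1/2) *\<^sub>R (((1+t)/2) *\<^sub>R ?V + ((1-t)/2) *\<^sub>R Amu b) = pair_matrix a b 0 0 t"
    unfolding A0_eq_pair_matrix[OF ab] Amu_eq_pair_matrix_fst[OF ab] Amu_eq_pair_matrix_snd[OF ab]
      pair_matrix_affine_comb2[OF u(3)]
    by (subst pair_matrix_affine_comb2) (simp_all add: field_simps)
  finally show ?thesis .
qed

section \<open>Averages over pairs of indices\<close>

definition offdiag_pairs :: "('n \<times> 'n) set" where
  "offdiag_pairs = {p. fst p \<noteq> snd p}"

definition pair_average :: "('n \<times> 'n \<Rightarrow> real) \<Rightarrow> real^'n^'n" where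
  "pair_average t = (\<Sum>p\<in>offdiag_pairs.
     (1 / card (offdiag_pairs :: ('n \<times> 'n) set)) *\<^sub>R pair_matrix (fst p) (snd p) 0 0 (t p))"

definition disjoint_pairs_count :: "'n \<Rightarrow> 'n \<Rightarrow> real" where
  "disjoint_pairs_count i j = (\<Sum>p\<in>offdiag_pairs. if fst p \<notin> {i, j} \<and> snd p \<notin> {i, j} then 1 else 0)"

lemma pair_average_diag:
  fixes t :: "'n::finite \<times> 'n \<Rightarrow> real"
  assumes "offdiag_pairs \<noteq> ({} :: ('n \<times> 'n) set)"
  shows "pair_average t $ i $ i = 1"
  using assms by (simp add: pair_average_def pair_matrix_diag)

lemma pair_average_offdiag:
  fixes t :: "'n::finite \<times> 'n \<Rightarrow> real"
  assumes "i \<noteq> j"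
  shows "pair_average t $ i $ j
    = (t (i, j) + t (j, i) + disjoint_pairs_count i j) / card (offdiag_pairs :: ('n \<times> 'n) set)"
proof -
  have "pair_matrix (fst p) (snd p) 0 0 (t p) $ i $ j = (if p = (i, j) then t p else 0)
      + (if p = (j, i) then t p else 0) + (if fst p \<notin> {i, j} \<and> snd p \<notin> {i, j} then 1 else 0)"
    if "p \<in> offdiag_pairs" for p
    using that assms by (cases p) (auto simp: offdiag_pairs_def pair_matrix_def)
  then have "(\<Sum>p\<in>offdiag_pairs. pair_matrix (fst p) (snd p) 0 0 (t p) $ i $ j)
      = t (i, j) + t (j, i) + disjoint_pairs_count i j"
    using assms by (simp add: sum.distrib disjoint_pairs_count_def offdiag_pairs_def)
  then show ?thesis
    by (simp add: pair_average_def sum_divide_distrib[symmetric])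
qed

lemma disjoint_pairs_count_bounds:
  fixes i j :: "'n::finite"
  shows "0 \<le> disjoint_pairs_count i j" "disjoint_pairs_count i j \<le> card (offdiag_pairs :: ('n \<times> 'n) set)"
proof -
  show "0 \<le> disjoint_pairs_count i j"
    unfolding disjoint_pairs_count_def by (rule sum_nonneg) simp
  have "disjoint_pairs_count i j \<le> (\<Sum>p\<in>(offdiag_pairs :: ('n \<times> 'n) set). 1)"
    unfolding disjoint_pairs_count_def by (rule sum_mono) simp
  then show "disjoint_pairs_count i j \<le> card (offdiag_pairs :: ('n \<times> 'n) set)" by simp
qed

lemma pair_average_decomposition:
  fixes X :: "real^'n::finite^'n"
  assumes sym: "\<And>i j. X$i$j = X$j$i" and diag: "\<And>i. X$i$i = 1"
    and ne: "offdiag_pairs \<noteq> ({} :: ('n \<times> 'n) set)"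
  defines "M \<equiv> real (card (offdiag_pairs :: ('n \<times> 'n) set))"
  shows "pair_average (\<lambda>p. (X $ fst p $ snd p - disjoint_pairs_count (fst p) (snd p) / M) / 2)
    = (1/M) *\<^sub>R X + (1 - 1/M) *\<^sub>R pair_average (\<lambda>_. 0)"
proof -
  have "M \<noteq> 0" using ne unfolding M_def offdiag_pairs_def by simp
  have "pair_average (\<lambda>p. (X $ fst p $ snd p - disjoint_pairs_count (fst p) (snd p) / M) / 2) $ i $ j
    = ((1/M) *\<^sub>R X + (1 - 1/M) *\<^sub>R pair_average (\<lambda>_. 0)) $ i $ j" for i j
  proof (cases "i = j")
    case True
    then show ?thesis using diag by (simp add: pair_average_diag[OF ne] algebra_simps)
  next
    case False
    have "disjoint_pairs_count j i = disjoint_pairs_count i j"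
      unfolding disjoint_pairs_count_def by (rule sum.cong) auto
    then show ?thesis
      using False sym[of i j] \<open>M \<noteq> 0\<close>
      by (simp add: pair_average_offdiag M_def[symmetric] field_simps)
  qed
  then show ?thesis by (simp add: vec_eq_iff)
qed

lemma pair_average_fixed:
  fixes \<sigma> :: "real^'n::finite^'n \<Rightarrow> real^'n^'n"
  assumes bij: "bij_betw \<sigma> elliptope elliptope" and aff: "affine_on elliptope \<sigma>"
    and fixed: "\<sigma> A0 = A0" "\<forall>mu. \<sigma> (Amu mu) = Amu mu"
    and ne: "offdiag_pairs \<noteq> ({} :: ('n \<times> 'n) set)" and t: "\<And>p. \<bar>t p\<bar> \<le> 1"
  shows "pair_average t \<in> {X \<in> elliptope. \<sigma> X = X}"
  unfolding pair_average_def
proof (rule convex_sum[OF _ convex_fixed_points[OF convex_elliptope aff]])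
  show "(\<Sum>p\<in>(offdiag_pairs :: ('n \<times> 'n) set). 1 / real (card (offdiag_pairs :: ('n \<times> 'n) set))) = 1"
    using ne by simp
  show "pair_matrix (fst p) (snd p) 0 0 (t p) \<in> {X \<in> elliptope. \<sigma> X = X}"
    if "p \<in> offdiag_pairs" for p
    using fixes_pair_matrix_offdiag[OF bij aff fixed(1)] fixed(2) t that
    by (simp add: offdiag_pairs_def)
qed simp_all

lemma pair_average_weight_abs_le:
  fixes X :: "real^'n::finite^'n"
  assumes X: "X \<in> elliptope" and ne: "offdiag_pairs \<noteq> ({} :: ('n \<times> 'n) set)"
  defines "M \<equiv> real (card (offdiag_pairs :: ('n \<times> 'n) set))"
  shows "\<bar>(X $ i $ j - disjoint_pairs_count i j / M) / 2\<bar> \<le> 1"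
proof -
  have "1 \<le> M" using ne unfolding M_def by (simp add: Suc_le_eq card_gt_0_iff)
  then have "0 \<le> disjoint_pairs_count i j / M" "disjoint_pairs_count i j / M \<le> 1"
    using disjoint_pairs_count_bounds[of i j] by (simp_all add: M_def divide_le_eq_1)
  then show ?thesis
    using elliptope_entry_abs_le[OF X, of i j] by (simp add: abs_le_iff field_simps; linarith)
qed

lemma elliptope_eq_A0_if_no_offdiag_pairs:
  fixes X :: "real^'n::finite^'n"
  assumes "X \<in> elliptope" and "offdiag_pairs = ({} :: ('n \<times> 'n) set)"
  shows "X = A0"
proof -
  have "X $ i $ j = A0 $ i $ j" for i j
  proof -
    have "(i, j) \<notin> offdiag_pairs" using assms(2) by simp
    then have "i = j" by (simp add: offdiag_pairs_def)
    then show ?thesis by (simp add: A0_def elliptope_diag[OF assms(1)])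
  qed
  then show ?thesis by (simp add: vec_eq_iff)
qed

theorem lemma12:
  fixes \<sigma> :: "real^'n^'n \<Rightarrow> real^'n^'n"
  assumes "bij_betw \<sigma> elliptope elliptope"
    and "affine_on elliptope \<sigma>"
    and "\<sigma> A0 = A0"
    and "\<forall>mu. \<sigma> (Amu mu) = Amu mu"
  shows "\<forall>X \<in> elliptope. \<sigma> X = X"
proof
  fix X :: "real^'n^'n"
  assume X: "X \<in> elliptope"
  show "\<sigma> X = X"
  proof (cases "offdiag_pairs = ({} :: ('n \<times> 'n) set)")
    case True
    then show ?thesis using elliptope_eq_A0_if_no_offdiag_pairs[OF X] assms(3) by simp
  next
    case False
    define M where "M = real (card (offdiag_pairs :: ('n \<times> 'n) set))"
    define t where "t = (\<lambda>p. (X $ fst p $ snd p - disjoint_pairs_count (fst p) (snd p) / M) / 2)"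
    have "\<bar>t p\<bar> \<le> 1" for p
      unfolding t_def M_def by (rule pair_average_weight_abs_le[OF X False])
    then have "pair_average t \<in> {X \<in> elliptope. \<sigma> X = X}"
      by (rule pair_average_fixed[OF assms False])
    moreover have W: "pair_average (\<lambda>_. 0) \<in> {X \<in> elliptope. \<sigma> X = X}"
      by (rule pair_average_fixed[OF assms False]) simp
    moreover have "pair_average t = (1/M) *\<^sub>R X + (1 - 1/M) *\<^sub>R pair_average (\<lambda>_. 0)"
      unfolding t_def M_def
      by (rule pair_average_decomposition[OF elliptope_entry_sym[OF X] elliptope_diag[OF X] False])
    moreover have "0 < 1/M" "1/M \<le> 1"
      using False unfolding M_def by (simp_all add: card_gt_0_iff Suc_le_eq)
    ultimately show ?thesis
      using affine_on_cancel[OF assms(2) X, of "pair_average (\<lambda>_. 0)" "1/M" X] by simp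
  qed
qed

end
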